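(* Let $t\ge 2$, $m\ge 1$ and $k_1,\dots,k_t\ge 2$ be integers. If a finite simple graph $G$ contains an induced subgraph isomorphic to the vertex-disjoint union $P_{k_1}\cup\cdots\cup P_{k_t}\cup mP_1$ of paths on $k_1,\dots,k_t$ vertices and $m$ isolated vertices, then \[\mathrm{mur}(G)\ge \Big(\sum_{i=1}^t k_i\Big)-t.\]
   Context: For a finite simple undirected graph $G$ on vertices $v_1,\dots,v_n$, let $A_G$ be its $(0,1)$-adjacency matrix, $D_G=\mathrm{diag}(d_1,\dots,d_n)$ with $d_i$ the degree of $v_i$, $I$ the $n\times n$ identity matrix and $J$ the $n\times n$ all-ones matrix. A universal adjacency matrix of $G$ is any matrix $\alpha A_G+\beta I+\gamma J+\delta D_G$ with real scalars $\alpha,\beta,\gamma,\delta$ and $\alpha\neq 0$. The minimum universal rank $\mathrm{mur}(G)$ is the minimum rank over all universal adjacency matrices of $G$. *)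

theory Defs
  imports "HOL-Analysis.Analysis"
begin

definition simple_graph :: "('n::finite \<Rightarrow> 'n \<Rightarrow> bool) \<Rightarrow> bool" where
  "simple_graph E \<longleftrightarrow> (\<forall>u v. E u v \<longrightarrow> E v u) \<and> (\<forall>v. \<not> E v v)"

definition adj_matrix :: "('n::finite \<Rightarrow> 'n \<Rightarrow> bool) \<Rightarrow> real^'n^'n" where
  "adj_matrix E = (\<chi> i j. if E i j then 1 else 0)"

definition degree :: "('n::finite \<Rightarrow> 'n \<Rightarrow> bool) \<Rightarrow> 'n \<Rightarrow> nat" where
  "degree E v = card {w. E v w}"

definition deg_matrix :: "('n::finite \<Rightarrow> 'n \<Rightarrow> bool) \<Rightarrow> real^'n^'n" where
  "deg_matrix E = (\<chi> i j. if i = j then real (degree E i) else 0)"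

definition ones_matrix :: "real^'n^'n" where
  "ones_matrix = (\<chi> i j. 1)"

definition universal_adj :: "('n::finite \<Rightarrow> 'n \<Rightarrow> bool) \<Rightarrow> real \<Rightarrow> real \<Rightarrow> real \<Rightarrow> real \<Rightarrow> real^'n^'n" where
  "universal_adj E \<alpha> \<beta> \<gamma> \<delta> =
     \<alpha> *\<^sub>R adj_matrix E + \<beta> *\<^sub>R mat 1 + \<gamma> *\<^sub>R ones_matrix + \<delta> *\<^sub>R deg_matrix E"

definition mur :: "('n::finite \<Rightarrow> 'n \<Rightarrow> bool) \<Rightarrow> nat" where
  "mur E = Min {rank (universal_adj E \<alpha> \<beta> \<gamma> \<delta>) | \<alpha> \<beta> \<gamma> \<delta>. \<alpha> \<noteq> 0}"

text \<open>The graph P_{k_0} \<union> ... \<union> P_{k_{t-1}} \<union> m P_1: vertices Inl (i,j) with i<t, j<k i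
  (j-th vertex of the i-th path) and Inr l with l<m (isolated vertices).\<close>
definition paths_union_verts :: "nat \<Rightarrow> (nat \<Rightarrow> nat) \<Rightarrow> nat \<Rightarrow> ((nat \<times> nat) + nat) set" where
  "paths_union_verts t k m = {Inl (i, j) | i j. i < t \<and> j < k i} \<union> {Inr l | l. l < m}"

fun paths_union_adj :: "((nat \<times> nat) + nat) \<Rightarrow> ((nat \<times> nat) + nat) \<Rightarrow> bool" where
  "paths_union_adj (Inl (i, j)) (Inl (i', j')) = (i = i' \<and> (j' = j + 1 \<or> j = j' + 1))"
| "paths_union_adj _ _ = False"

definition has_induced_copy :: "('n \<Rightarrow> 'n \<Rightarrow> bool) \<Rightarrow> 'v set \<Rightarrow> ('v \<Rightarrow> 'v \<Rightarrow> bool) \<Rightarrow> bool" where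
  "has_induced_copy E V H \<longleftrightarrow>
     (\<exists>f. inj_on f V \<and> (\<forall>u\<in>V. \<forall>v\<in>V. E (f u) (f v) \<longleftrightarrow> H u v))"

end

theory Submission imports Defs begin

text \<open>Let \<open>M = \<alpha> A + \<beta> I + \<gamma> J + \<delta> D\<close> with \<open>\<alpha> \<noteq> 0\<close>, and let \<open>C\<close> consist of all path vertices
  except the first vertex of each path, so \<open>|C| = \<Sum>k\<^sub>i - t\<close>. If \<open>M x = 0\<close> with \<open>x\<close> supported
  on \<open>C\<close>, the row of an isolated vertex gives \<open>\<gamma> \<Sum>x = 0\<close>, so \<open>x\<close> is also annihilated by the
  rows of \<open>M - \<gamma> J\<close>. On the columns \<open>C\<close>, the row of the predecessor of a path vertex has
  entry \<open>\<alpha>\<close> at that vertex and zeros at all vertices at least as far along their paths;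
  this triangular structure forces \<open>x = 0\<close>. Hence the columns \<open>C\<close> of \<open>M\<close> are independent.\<close>

lemma card_le_rank_if_kernel_avoids_coordinate_subspace:
  fixes M :: "real^'n^'m" and D :: "'n set"
  assumes "\<And>x. \<forall>i. i \<notin> D \<longrightarrow> x$i = 0 \<Longrightarrow> M *v x = 0 \<Longrightarrow> x = 0"
  shows "card D \<le> rank M"
proof -
  define W where "W = {x::real^'n. \<forall>i. i \<notin> D \<longrightarrow> x$i = 0}"
  have "vec.dim W = card D"
    unfolding W_def by (rule dim_substandard_cart)
  then have "dim W = card D"
    using dim_vec_eq[of W] by simp
  have "span W = W"
    unfolding span_eq_iff W_def subspace_def by auto
  have "inj_on ((*v) M) (span W)"
    unfolding \<open>span W = W\<close>
  proof (rule inj_onI)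
    fix x y assume "x \<in> W" "y \<in> W" "M *v x = M *v y"
    then show "x = y"
      using assms[of "x - y"] by (auto simp: W_def matrix_vector_mult_diff_distrib)
  qed
  then have "dim ((*v) M ` W) = dim W"
    by (rule dim_image_eq[OF matrix_vector_mul_linear])
  moreover have "dim ((*v) M ` W) \<le> dim (range ((*v) M))"
    by (rule dim_subset) auto
  ultimately show ?thesis
    using \<open>dim W = card D\<close> rank_dim_range[of M] by simp
qed

lemma matrix_vector_mult_component_supported:
  fixes M :: "'a::comm_semiring_1^'n::finite^'m" and col :: "'i \<Rightarrow> 'n"
  assumes "inj_on col I" and "\<forall>v. v \<notin> col ` I \<longrightarrow> x$v = 0"
  shows "(M *v x) $ u = (\<Sum>i\<in>I. M$u$col i * x$col i)"
proof -
  have "(M *v x) $ u = (\<Sum>v\<in>col ` I. M$u$v * x$v)"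
    unfolding matrix_vector_mult_def
    by (simp, rule sum.mono_neutral_right) (use assms(2) in auto)
  also have "\<dots> = (\<Sum>i\<in>I. M$u$col i * x$col i)"
    by (simp add: sum.reindex[OF assms(1)])
  finally show ?thesis .
qed

lemma universal_adj_offdiag:
  assumes "u \<noteq> v"
  shows "universal_adj E \<alpha> \<beta> \<gamma> \<delta> $ u $ v = (if E u v then \<alpha> else 0) + \<gamma>"
  using assms
  by (simp add: universal_adj_def adj_matrix_def ones_matrix_def deg_matrix_def mat_def)

lemma universal_adj_kernel_triangular:
  fixes E :: "'n::finite \<Rightarrow> 'n \<Rightarrow> bool" and col row :: "'i \<Rightarrow> 'n" and h :: "'i \<Rightarrow> nat"
  assumes "simple_graph E" and "\<alpha> \<noteq> 0" and "inj_on col I"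
    and isolated: "\<forall>i\<in>I. w \<noteq> col i \<and> \<not> E w (col i)"
    and pivot: "\<forall>i\<in>I. E (row i) (col i)"
    and beyond_pivot: "\<forall>i\<in>I. \<forall>j\<in>I. j \<noteq> i \<and> h i \<le> h j \<longrightarrow> row i \<noteq> col j \<and> \<not> E (row i) (col j)"
    and supp: "\<forall>v. v \<notin> col ` I \<longrightarrow> x$v = 0"
    and ker: "universal_adj E \<alpha> \<beta> \<gamma> \<delta> *v x = 0"
  shows "x = 0"
proof -
  define M where "M = universal_adj E \<alpha> \<beta> \<gamma> \<delta>"
  have "finite I"
    using finite_imageD[OF _ \<open>inj_on col I\<close>] by simp
  have row_sum: "(\<Sum>i\<in>I. M$u$col i * x$col i) = 0" for u
    using matrix_vector_mult_component_supported[OF \<open>inj_on col I\<close> supp, of M u] ker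
    by (simp add: M_def)
  have "\<gamma> * (\<Sum>i\<in>I. x$col i) = 0"
    using row_sum[of w] isolated by (simp add: M_def universal_adj_offdiag sum_distrib_left)
  then have shifted_row_sum: "(\<Sum>i\<in>I. (M$u$col i - \<gamma>) * x$col i) = 0" for u
    using row_sum[of u] by (simp add: algebra_simps sum_subtractf sum_distrib_left)
  have "x$col i = 0" if "i \<in> I" for i
    using that
  proof (induction "h i" arbitrary: i rule: less_induct)
    case less
    have "row i \<noteq> col i"
      using pivot less.prems \<open>simple_graph E\<close> by (auto simp: simple_graph_def)
    have "(M$row i$col j - \<gamma>) * x$col j = 0" if "j \<in> I - {i}" for j
    proof (cases "h j < h i")
      case True
      then show ?thesis using less.hyps that by simp
    next
      case False
      then show ?thesis
        using beyond_pivot less.prems that by (simp add: M_def universal_adj_offdiag)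
    qed
    then have "(\<Sum>j\<in>I. (M$row i$col j - \<gamma>) * x$col j) = (M$row i$col i - \<gamma>) * x$col i"
      by (simp add: sum.remove[OF \<open>finite I\<close> less.prems] sum.neutral)
    also have "\<dots> = \<alpha> * x$col i"
      using pivot less.prems \<open>row i \<noteq> col i\<close> by (simp add: M_def universal_adj_offdiag)
    finally show ?case
      using shifted_row_sum[of "row i"] \<open>\<alpha> \<noteq> 0\<close> by simp
  qed
  then show "x = 0"
    using supp by (metis imageE vec_eq_iff zero_index)
qed

lemma mur_ge_if_rank_ge:
  fixes E :: "'n::finite \<Rightarrow> 'n \<Rightarrow> bool"
  assumes "\<And>\<alpha> \<beta> \<gamma> \<delta>. \<alpha> \<noteq> 0 \<Longrightarrow> r \<le> rank (universal_adj E \<alpha> \<beta> \<gamma> \<delta>)"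
  shows "r \<le> mur E"
proof -
  define S where "S = {rank (universal_adj E \<alpha> \<beta> \<gamma> \<delta>) | \<alpha> \<beta> \<gamma> \<delta>. \<alpha> \<noteq> 0}"
  have "finite S"
    using rank_bound by (intro finite_subset[of S "{..CARD('n)}"]) (force simp: S_def)+
  moreover have "S \<noteq> {}"
    unfolding S_def by force
  ultimately have "r \<le> Min S"
    using assms by (auto simp: Min_ge_iff S_def)
  then show ?thesis
    by (simp add: mur_def S_def)
qed

lemma card_non_initial_path_vertices:
  assumes "\<forall>i<t. k i \<ge> 1"
  shows "card (SIGMA i:{..<t}. {1..<k i}) = (\<Sum>i<t. k i) - t"
proof -
  have "(\<Sum>i<t. k i - 1) = (\<Sum>i<t. k i) - (\<Sum>i<t. 1)"
    using assms by (intro sum_subtractf_nat) auto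
  then show ?thesis
    by simp
qed

lemma induced_paths_union_pivots:
  fixes E :: "'n \<Rightarrow> 'n \<Rightarrow> bool" and f :: "(nat \<times> nat) + nat \<Rightarrow> 'n"
  assumes inj: "inj_on f (paths_union_verts t k m)"
    and induced: "\<forall>u\<in>paths_union_verts t k m. \<forall>v\<in>paths_union_verts t k m.
      E (f u) (f v) \<longleftrightarrow> paths_union_adj u v"
    and "m \<ge> 1"
  defines "I \<equiv> SIGMA i:{..<t}. {1..<k i}"
    and "col \<equiv> \<lambda>(i, j). f (Inl (i, j))" and "prev \<equiv> \<lambda>(i, j). f (Inl (i, j - 1))"
  shows "inj_on col I"
    and "\<forall>p\<in>I. f (Inr 0) \<noteq> col p \<and> \<not> E (f (Inr 0)) (col p)"
    and "\<forall>p\<in>I. E (prev p) (col p)"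
    and "\<forall>p\<in>I. \<forall>q\<in>I. q \<noteq> p \<and> snd p \<le> snd q \<longrightarrow> prev p \<noteq> col q \<and> \<not> E (prev p) (col q)"
proof -
  have path_vertex: "Inl (i, j) \<in> paths_union_verts t k m" if "i < t" "j < k i" for i j
    using that by (simp add: paths_union_verts_def)
  have "Inr 0 \<in> paths_union_verts t k m"
    using \<open>m \<ge> 1\<close> by (simp add: paths_union_verts_def)
  show "inj_on col I"
  proof (rule inj_onI)
    fix p q assume "p \<in> I" "q \<in> I" "col p = col q"
    then show "p = q"
      using inj_on_eq_iff[OF inj path_vertex path_vertex] by (auto simp: I_def col_def)
  qed
  show "\<forall>p\<in>I. f (Inr 0) \<noteq> col p \<and> \<not> E (f (Inr 0)) (col p)"
  proof
    fix p assume "p \<in> I"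
    then show "f (Inr 0) \<noteq> col p \<and> \<not> E (f (Inr 0)) (col p)"
      using inj_on_eq_iff[OF inj] induced path_vertex \<open>Inr 0 \<in> _\<close>
      by (auto simp: I_def col_def)
  qed
  show "\<forall>p\<in>I. E (prev p) (col p)"
    using induced path_vertex by (auto simp: I_def prev_def col_def)
  show "\<forall>p\<in>I. \<forall>q\<in>I. q \<noteq> p \<and> snd p \<le> snd q \<longrightarrow> prev p \<noteq> col q \<and> \<not> E (prev p) (col q)"
  proof (intro ballI impI)
    fix p q assume "p \<in> I" "q \<in> I" "q \<noteq> p \<and> snd p \<le> snd q"
    obtain i j i' j' where "p = (i, j)" "q = (i', j')"
      by fastforce
    with \<open>p \<in> I\<close> \<open>q \<in> I\<close> \<open>q \<noteq> p \<and> snd p \<le> snd q\<close>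
    have "i < t" "i' < t" "1 \<le> j" "j < k i" "j' < k i'" "(i', j') \<noteq> (i, j)" "j \<le> j'"
      by (auto simp: I_def)
    moreover have "Inl (i, j - 1) \<noteq> Inl (i', j') \<and> \<not> paths_union_adj (Inl (i, j - 1)) (Inl (i', j'))"
      using calculation by auto
    moreover have "Inl (i, j - 1) \<in> paths_union_verts t k m" "Inl (i', j') \<in> paths_union_verts t k m"
      using calculation path_vertex by simp_all
    ultimately show "prev p \<noteq> col q \<and> \<not> E (prev p) (col q)"
      using \<open>p = (i, j)\<close> \<open>q = (i', j')\<close> inj_on_eq_iff[OF inj] induced
      by (simp add: prev_def col_def)
  qed
qed

theorem lemma9:
  fixes E :: "'n::finite \<Rightarrow> 'n \<Rightarrow> bool"
    and t m :: nat and k :: "nat \<Rightarrow> nat"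
  assumes "simple_graph E"
    and "t \<ge> 2" and "m \<ge> 1"
    and "\<forall>i<t. k i \<ge> 2"
    and "has_induced_copy E (paths_union_verts t k m) paths_union_adj"
  shows "mur E \<ge> (\<Sum>i<t. k i) - t"
proof -
  obtain f where inj: "inj_on f (paths_union_verts t k m)"
    and induced: "\<forall>u\<in>paths_union_verts t k m. \<forall>v\<in>paths_union_verts t k m.
      E (f u) (f v) \<longleftrightarrow> paths_union_adj u v"
    using assms(5) unfolding has_induced_copy_def by blast
  define I where "I = (SIGMA i:{..<t}. {1..<k i})"
  define col where "col = (\<lambda>(i, j). f (Inl (i, j)))"
  define prev where "prev = (\<lambda>(i, j). f (Inl (i, j - 1)))"
  note pivots = induced_paths_union_pivots[OF inj induced \<open>m \<ge> 1\<close>, folded I_def col_def prev_def]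
  have "card (col ` I) \<le> rank (universal_adj E \<alpha> \<beta> \<gamma> \<delta>)" if "\<alpha> \<noteq> 0" for \<alpha> \<beta> \<gamma> \<delta>
  proof (rule card_le_rank_if_kernel_avoids_coordinate_subspace)
    fix x assume "\<forall>v. v \<notin> col ` I \<longrightarrow> x$v = 0" "universal_adj E \<alpha> \<beta> \<gamma> \<delta> *v x = 0"
    then show "x = 0"
      by (rule universal_adj_kernel_triangular[OF \<open>simple_graph E\<close> that pivots])
  qed
  moreover have "card (col ` I) = card I"
    by (rule card_image[OF pivots(1)])
  moreover have "card I = (\<Sum>i<t. k i) - t"
    unfolding I_def by (rule card_non_initial_path_vertices) (use assms(4) in auto)
  ultimately show ?thesis
    by (intro mur_ge_if_rank_ge) simp
qed

end
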